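(* Let $F\in\mathbb C[u]$ be a polynomial of degree $6$ without multiple roots. Then there are only finitely many pairs $(P,Q)$ of polynomials in $\mathbb C[u]$ with $\deg P=3$, $\deg Q=2$ and $F=P^2-Q^3$. *)

theory Defs
  imports Complex_Main "HOL-Computational_Algebra.Polynomial"
begin

end

theory Submission
  imports Defs "HOL-Analysis.Analysis" "HOL-Computational_Algebra.Fundamental_Theorem_Algebra"
    "HOL-Computational_Algebra.Polynomial_Factorial" "HOL-Computational_Algebra.Field_as_Ring"
begin

(* Let S be the set of pairs (P, Q) with deg P <= 3, deg Q <= 2 and P^2 - Q^3 = F. Viewed through
   coefficient vectors, S is closed; we show that it is also bounded and discrete, hence finite by
   Bolzano-Weierstrass.

   Discreteness: a sequence in S approaching (P0, Q0) gives, after normalising the secants, a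
   nonzero pair (U, V) with 2 P0 U = 3 Q0^2 V. As F is squarefree, P0 and Q0 are coprime, so
   Q0^2 divides U, and counting degrees forces U = V = 0.

   Boundedness: if S were unbounded, the weighted rescalings (s^3 P, s^2 Q) with s -> 0 would have
   a nonzero limit (P, Q) with P^2 = Q^3. The identity P (2 P' Q - 3 P Q') = F' Q - 3 F Q' survives
   the rescaling, so in the limit P divides F' Q - 3 F Q' with a cofactor of degree <= 4. But then
   Q = c (x - a)^2 and (x - a)^3 divides P, and this forces a double root of F at a. *)

section \<open>Coefficientwise convergence of polynomials\<close>

definition coeffs_tendsto :: "(nat \<Rightarrow> 'a::{zero,topological_space} poly) \<Rightarrow> 'a poly \<Rightarrow> bool" where
  "coeffs_tendsto X p \<longleftrightarrow> (\<forall>i. (\<lambda>n. coeff (X n) i) \<longlonglongrightarrow> coeff p i)"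

lemma coeffs_tendsto_const: "coeffs_tendsto (\<lambda>n. p) p"
  by (simp add: coeffs_tendsto_def)

lemma coeffs_tendsto_add:
  fixes X Y :: "nat \<Rightarrow> 'a::{comm_monoid_add,topological_monoid_add} poly"
  shows "coeffs_tendsto X p \<Longrightarrow> coeffs_tendsto Y q \<Longrightarrow> coeffs_tendsto (\<lambda>n. X n + Y n) (p + q)"
  by (auto simp: coeffs_tendsto_def intro!: tendsto_add)

lemma coeffs_tendsto_diff:
  fixes X Y :: "nat \<Rightarrow> 'a::{ab_group_add,topological_group_add} poly"
  shows "coeffs_tendsto X p \<Longrightarrow> coeffs_tendsto Y q \<Longrightarrow> coeffs_tendsto (\<lambda>n. X n - Y n) (p - q)"
  by (auto simp: coeffs_tendsto_def intro!: tendsto_diff)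

lemma coeffs_tendsto_mult:
  fixes X Y :: "nat \<Rightarrow> 'a::real_normed_field poly"
  shows "coeffs_tendsto X p \<Longrightarrow> coeffs_tendsto Y q \<Longrightarrow> coeffs_tendsto (\<lambda>n. X n * Y n) (p * q)"
  unfolding coeffs_tendsto_def coeff_mult by (auto intro!: tendsto_sum tendsto_mult)

lemma coeffs_tendsto_power:
  fixes X :: "nat \<Rightarrow> 'a::real_normed_field poly"
  shows "coeffs_tendsto X p \<Longrightarrow> coeffs_tendsto (\<lambda>n. X n ^ k) (p ^ k)"
  by (induction k) (auto intro: coeffs_tendsto_mult coeffs_tendsto_const)

lemma coeffs_tendsto_smult:
  fixes X :: "nat \<Rightarrow> 'a::real_normed_field poly"
  shows "c \<longlonglongrightarrow> d \<Longrightarrow> coeffs_tendsto X p \<Longrightarrow> coeffs_tendsto (\<lambda>n. smult (c n) (X n)) (smult d p)"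
  by (auto simp: coeffs_tendsto_def intro!: tendsto_mult)

lemma coeffs_tendsto_pderiv:
  fixes X :: "nat \<Rightarrow> 'a::real_normed_field poly"
  shows "coeffs_tendsto X p \<Longrightarrow> coeffs_tendsto (\<lambda>n. pderiv (X n)) (pderiv p)"
  by (auto simp: coeffs_tendsto_def coeff_pderiv intro!: tendsto_mult)

lemma coeffs_tendsto_unique:
  fixes X :: "nat \<Rightarrow> 'a::{zero,t2_space} poly"
  shows "coeffs_tendsto X p \<Longrightarrow> coeffs_tendsto X q \<Longrightarrow> p = q"
  by (auto simp: coeffs_tendsto_def poly_eq_iff intro: LIMSEQ_unique)

lemma coeffs_tendsto_subseq:
  "coeffs_tendsto X p \<Longrightarrow> strict_mono r \<Longrightarrow> coeffs_tendsto (\<lambda>n. X (r n)) p"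
  unfolding coeffs_tendsto_def using LIMSEQ_subseq_LIMSEQ by (fastforce simp: o_def)

lemma coeffs_tendsto_degree_le:
  fixes X :: "nat \<Rightarrow> 'a::{zero,t2_space} poly"
  assumes "coeffs_tendsto X p" "\<And>n. degree (X n) \<le> k"
  shows "degree p \<le> k"
proof (rule degree_le, intro allI impI)
  fix i assume "k < i"
  then have "(\<lambda>n. coeff (X n) i) = (\<lambda>n. 0)"
    using assms(2) by (metis coeff_eq_0 le_less_trans)
  then show "coeff p i = 0"
    using assms(1) LIMSEQ_unique tendsto_const unfolding coeffs_tendsto_def by metis
qed

definition poly_norm :: "'a::real_normed_vector poly \<Rightarrow> real" where
  "poly_norm p = (\<Sum>i\<le>degree p. norm (coeff p i))"

lemma poly_norm_nonneg: "0 \<le> poly_norm p"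
  by (simp add: poly_norm_def sum_nonneg)

lemma poly_norm_0 [simp]: "poly_norm 0 = 0"
  by (simp add: poly_norm_def)

lemma poly_norm_eq_sum:
  assumes "degree p \<le> k"
  shows "poly_norm p = (\<Sum>i\<le>k. norm (coeff p i))"
  unfolding poly_norm_def using assms
  by (intro sum.mono_neutral_left) (auto simp: coeff_eq_0)

lemma poly_norm_eq_0_iff [simp]: "poly_norm p = 0 \<longleftrightarrow> p = 0"
proof
  assume "poly_norm p = 0"
  then have "\<forall>i\<le>degree p. coeff p i = 0"
    by (simp add: poly_norm_def sum_nonneg_eq_0_iff)
  then show "p = 0"
    using leading_coeff_0_iff by blast
qed simp

lemma norm_coeff_le_poly_norm: "norm (coeff p i) \<le> poly_norm p"
proof (cases "i \<le> degree p")
  case True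
  then show ?thesis
    unfolding poly_norm_def by (intro member_le_sum) auto
qed (simp add: coeff_eq_0 poly_norm_nonneg)

lemma poly_norm_smult:
  fixes p :: "'a::real_normed_field poly"
  shows "poly_norm (smult c p) = norm c * poly_norm p"
  using poly_norm_eq_sum[OF degree_smult_le, of c p]
  by (simp add: poly_norm_def norm_mult sum_distrib_left)

lemma coeffs_tendsto_poly_norm:
  assumes "coeffs_tendsto X p" "\<And>n. degree (X n) \<le> k"
  shows "(\<lambda>n. poly_norm (X n)) \<longlonglongrightarrow> poly_norm p"
proof -
  have "(\<lambda>n. \<Sum>i\<le>k. norm (coeff (X n) i)) \<longlonglongrightarrow> (\<Sum>i\<le>k. norm (coeff p i))"
    using assms(1) unfolding coeffs_tendsto_def by (intro tendsto_sum tendsto_norm) auto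
  then show ?thesis
    using poly_norm_eq_sum[OF assms(2)] poly_norm_eq_sum[OF coeffs_tendsto_degree_le[OF assms]]
    by simp
qed

lemma bounded_coeffs_tendsto_subseq:
  fixes X :: "nat \<Rightarrow> 'a::{real_normed_vector,heine_borel} poly"
  assumes deg: "\<And>n. degree (X n) \<le> k" and bound: "\<And>n. poly_norm (X n) \<le> M"
  obtains r p where "strict_mono r" "coeffs_tendsto (\<lambda>n. X (r n)) p"
proof -
  have "\<exists>l r. strict_mono r \<and>
      (\<forall>\<epsilon>>0. \<forall>\<^sub>F n in sequentially. \<forall>i\<in>{..k}. dist (coeff (X (r n)) i) (l i) < \<epsilon>)"
  proof (rule compact_lemma_general[where unproj = id and basis = "{..k}", rule_format])
    show "bounded ((\<lambda>c. c i) ` range (\<lambda>n. coeff (X n)))" for i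
      using order.trans[OF norm_coeff_le_poly_norm bound]
      by (intro boundedI[where B = M]) auto
  qed auto
  then obtain l r where r: "strict_mono r"
    and lim: "\<And>\<epsilon>. \<epsilon> > 0 \<Longrightarrow> \<forall>\<^sub>F n in sequentially. \<forall>i\<in>{..k}. dist (coeff (X (r n)) i) (l i) < \<epsilon>"
    by blast
  define p where "p = Poly (map l [0..<Suc k])"
  have "(\<lambda>n. coeff (X (r n)) i) \<longlonglongrightarrow> coeff p i" for i
  proof (cases "i \<le> k")
    case True
    then have "coeff p i = l i"
      by (simp add: p_def nth_default_def del: upt_Suc)
    moreover have "(\<lambda>n. coeff (X (r n)) i) \<longlonglongrightarrow> l i"
    proof (rule tendstoI)
      fix \<epsilon> :: real assume "\<epsilon> > 0"
      then show "\<forall>\<^sub>F n in sequentially. dist (coeff (X (r n)) i) (l i) < \<epsilon>"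
        using lim True by (fastforce elim: eventually_mono)
    qed
    ultimately show ?thesis by simp
  next
    case False
    then show ?thesis
      using deg by (simp add: p_def nth_default_def coeff_eq_0 le_less_trans[of _ k] del: upt_Suc)
  qed
  then show ?thesis
    using that r by (auto simp: coeffs_tendsto_def)
qed

lemma bounded_coeffs_tendsto_subseq_pair:
  fixes X Y :: "nat \<Rightarrow> 'a::{real_normed_vector,heine_borel} poly"
  assumes "\<And>n. degree (X n) \<le> k" "\<And>n. poly_norm (X n) \<le> M"
    and "\<And>n. degree (Y n) \<le> k" "\<And>n. poly_norm (Y n) \<le> M"
  obtains r p q where "strict_mono r" "coeffs_tendsto (\<lambda>n. X (r n)) p" "coeffs_tendsto (\<lambda>n. Y (r n)) q"
proof -
  obtain r1 p where r1: "strict_mono r1" "coeffs_tendsto (\<lambda>n. X (r1 n)) p"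
    using bounded_coeffs_tendsto_subseq[of X k M] assms(1,2) by blast
  obtain r2 q where r2: "strict_mono r2" "coeffs_tendsto (\<lambda>n. Y (r1 (r2 n))) q"
    using bounded_coeffs_tendsto_subseq[of "\<lambda>n. Y (r1 n)" k M] assms(3,4) by blast
  show ?thesis
  proof (rule that[of "r1 \<circ> r2"])
    show "strict_mono (r1 \<circ> r2)"
      using r1(1) r2(1) by (rule strict_mono_o)
  qed (use coeffs_tendsto_subseq[OF r1(2) r2(1)] r2(2) in auto)
qed

lemma coeffs_tendsto_subseq_or_rescaled:
  fixes B :: "nat \<Rightarrow> 'a::{real_normed_field,heine_borel} poly"
  assumes deg: "\<And>n. degree (B n) \<le> k"
  obtains (convergent) r B0 where "strict_mono r" "coeffs_tendsto (\<lambda>n. B (r n)) B0"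
    | (rescaled) r s W where "strict_mono r" "s \<longlonglongrightarrow> 0"
        "coeffs_tendsto (\<lambda>n. smult (of_real (s n)) (B (r n))) W" "W \<noteq> 0"
proof -
  define m where "m n = 1 + poly_norm (B n)" for n
  have m: "m n \<ge> 1" for n
    using poly_norm_nonneg[of "B n"] by (simp add: m_def)
  define W where "W n = smult (of_real (1 / m n)) (B n)" for n
  have norm_W: "poly_norm (W n) + 1 / m n = 1" for n
  proof -
    have "poly_norm (W n) = poly_norm (B n) / m n"
      unfolding W_def poly_norm_smult norm_of_real using m[of n] by simp
    then show ?thesis
      using m[of n] by (simp add: m_def field_simps)
  qed
  have deg_W: "degree (W n) \<le> k" for n
    using order.trans[OF degree_smult_le deg] by (simp only: W_def)
  moreover have "poly_norm (W n) \<le> 1" for n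
    using norm_W[of n] m[of n] divide_nonneg_nonneg[of 1 "m n"] by linarith
  ultimately obtain r1 W0 where r1: "strict_mono r1" "coeffs_tendsto (\<lambda>n. W (r1 n)) W0"
    by (rule bounded_coeffs_tendsto_subseq)
  have "bounded (range (\<lambda>n. 1 / m (r1 n)))"
  proof (rule boundedI[where B = 1], clarify)
    show "norm (1 / m (r1 n)) \<le> 1" for n
      using m[of "r1 n"] by simp
  qed
  from bounded_imp_convergent_subsequence[OF this]
  obtain s0 r2 where r2: "strict_mono r2" "((\<lambda>n. 1 / m (r1 n)) \<circ> r2) \<longlonglongrightarrow> s0"
    by blast
  define r where "r = r1 \<circ> r2"
  have r: "strict_mono r"
    using r1(1) r2(1) by (simp add: r_def strict_mono_o)
  have W: "coeffs_tendsto (\<lambda>n. W (r n)) W0"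
    using coeffs_tendsto_subseq[OF r1(2) r2(1)] by (simp add: r_def)
  have s: "(\<lambda>n. 1 / m (r n)) \<longlonglongrightarrow> s0"
    using r2(2) by (simp add: r_def o_def)
  have "(\<lambda>n. poly_norm (W (r n)) + 1 / m (r n)) \<longlonglongrightarrow> poly_norm W0 + s0"
    using deg_W by (intro tendsto_add coeffs_tendsto_poly_norm[OF W] s)
  then have W0_s0: "poly_norm W0 + s0 = 1"
    using norm_W by (simp add: LIMSEQ_const_iff)
  show ?thesis
  proof (cases "s0 = 0")
    case True
    then have "W0 \<noteq> 0"
      using W0_s0 by auto
    then show ?thesis
      using rescaled[OF r, of "\<lambda>n. 1 / m (r n)" W0] s W True by (simp add: W_def)
  next
    case False
    have "coeffs_tendsto (\<lambda>n. smult (of_real (1 / (1 / m (r n)))) (W (r n))) (smult (of_real (1 / s0)) W0)"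
      using False by (intro coeffs_tendsto_smult tendsto_of_real tendsto_divide tendsto_const s W)
    moreover have "smult (of_real (1 / (1 / m (r n)))) (W (r n)) = B (r n)" for n
      using m[of "r n"] by (simp add: W_def)
    ultimately show ?thesis
      using convergent[OF r] by simp
  qed
qed

lemma coeffs_tendsto_factor:
  fixes A B :: "nat \<Rightarrow> 'a::{real_normed_field,heine_borel} poly"
  assumes A: "coeffs_tendsto A A0" and "A0 \<noteq> 0" and deg: "\<And>n. degree (B n) \<le> k"
    and AB: "coeffs_tendsto (\<lambda>n. A n * B n) C"
  obtains B0 where "degree B0 \<le> k" "C = A0 * B0"
  using deg
proof (rule coeffs_tendsto_subseq_or_rescaled)
  fix r B0 assume r: "strict_mono r" and B0: "coeffs_tendsto (\<lambda>n. B (r n)) B0"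
  have "coeffs_tendsto (\<lambda>n. A (r n) * B (r n)) (A0 * B0)"
    by (intro coeffs_tendsto_mult coeffs_tendsto_subseq[OF A r] B0)
  then have "C = A0 * B0"
    using coeffs_tendsto_unique coeffs_tendsto_subseq[OF AB r] by blast
  then show ?thesis
    using that coeffs_tendsto_degree_le[OF B0 deg] by blast
next
  fix r s W assume r: "strict_mono r" and s: "s \<longlonglongrightarrow> 0"
    and W: "coeffs_tendsto (\<lambda>n. smult (of_real (s n)) (B (r n))) W" and "W \<noteq> 0"
  have "coeffs_tendsto (\<lambda>n. smult (of_real (s n)) (A (r n) * B (r n))) (smult (of_real 0) C)"
    by (intro coeffs_tendsto_smult tendsto_of_real s coeffs_tendsto_subseq[OF AB r])
  moreover have "coeffs_tendsto (\<lambda>n. A (r n) * smult (of_real (s n)) (B (r n))) (A0 * W)"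
    by (intro coeffs_tendsto_mult coeffs_tendsto_subseq[OF A r] W)
  ultimately have "A0 * W = 0"
    using coeffs_tendsto_unique by fastforce
  with \<open>A0 \<noteq> 0\<close> \<open>W \<noteq> 0\<close> show ?thesis
    by simp
qed

lemma secant_rescaling_subseq:
  fixes X Y :: "nat \<Rightarrow> 'a::{real_normed_field,heine_borel} poly"
  assumes deg: "\<And>n. degree (X n - X0) \<le> k" "\<And>n. degree (Y n - Y0) \<le> k"
    and ne: "\<And>n. (X n, Y n) \<noteq> (X0, Y0)"
    and X: "coeffs_tendsto X X0" and Y: "coeffs_tendsto Y Y0"
  obtains e r U V where "\<And>n. e n > 0" "e \<longlonglongrightarrow> 0" "strict_mono r"
    "coeffs_tendsto (\<lambda>n. smult (of_real (1 / e (r n))) (X (r n) - X0)) U"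
    "coeffs_tendsto (\<lambda>n. smult (of_real (1 / e (r n))) (Y (r n) - Y0)) V"
    "U \<noteq> 0 \<or> V \<noteq> 0"
proof -
  define e where "e n = poly_norm (X n - X0) + poly_norm (Y n - Y0)" for n
  have e_pos: "e n > 0" for n
  proof -
    have "poly_norm (X n - X0) \<noteq> 0 \<or> poly_norm (Y n - Y0) \<noteq> 0"
      using ne[of n] by auto
    then show ?thesis
      using poly_norm_nonneg[of "X n - X0"] poly_norm_nonneg[of "Y n - Y0"] unfolding e_def
      by linarith
  qed
  have "e \<longlonglongrightarrow> poly_norm (X0 - X0) + poly_norm (Y0 - Y0)"
    unfolding e_def using deg
    by (intro tendsto_add coeffs_tendsto_poly_norm coeffs_tendsto_diff X Y coeffs_tendsto_const)
  then have e: "e \<longlonglongrightarrow> 0"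
    by simp
  define Us where "Us n = smult (of_real (1 / e n)) (X n - X0)" for n
  define Vs where "Vs n = smult (of_real (1 / e n)) (Y n - Y0)" for n
  have norm_UVs: "poly_norm (Us n) + poly_norm (Vs n) = 1" for n
  proof -
    have "poly_norm (Us n) + poly_norm (Vs n) = (poly_norm (X n - X0) + poly_norm (Y n - Y0)) / e n"
      using e_pos[of n] by (simp add: Us_def Vs_def poly_norm_smult norm_divide add_divide_distrib)
    then show ?thesis
      using e_pos[of n] by (simp add: e_def)
  qed
  have deg_Us: "degree (Us n) \<le> k" and deg_Vs: "degree (Vs n) \<le> k" for n
    using deg[of n] order.trans[OF degree_smult_le] by (simp_all only: Us_def Vs_def)
  have "poly_norm (Us n) \<le> 1" "poly_norm (Vs n) \<le> 1" for n
    using norm_UVs[of n] poly_norm_nonneg[of "Us n"] poly_norm_nonneg[of "Vs n"] by linarith+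
  then obtain r U V where r: "strict_mono r"
    and U: "coeffs_tendsto (\<lambda>n. Us (r n)) U" and V: "coeffs_tendsto (\<lambda>n. Vs (r n)) V"
    using bounded_coeffs_tendsto_subseq_pair[of Us k 1 Vs] deg_Us deg_Vs by blast
  have "(\<lambda>n. poly_norm (Us (r n)) + poly_norm (Vs (r n))) \<longlonglongrightarrow> poly_norm U + poly_norm V"
    using deg_Us deg_Vs by (intro tendsto_add coeffs_tendsto_poly_norm U V)
  then have "poly_norm U + poly_norm V = 1"
    using norm_UVs by (simp add: LIMSEQ_const_iff)
  then have "U \<noteq> 0 \<or> V \<noteq> 0"
    by auto
  moreover have "coeffs_tendsto (\<lambda>n. smult (of_real (1 / e (r n))) (X (r n) - X0)) U"
    "coeffs_tendsto (\<lambda>n. smult (of_real (1 / e (r n))) (Y (r n) - Y0)) V"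
    using U V by (simp_all only: Us_def Vs_def)
  ultimately show ?thesis
    using that[OF e_pos e r] by blast
qed

lemma weighted_size_smult:
  fixes P Q :: "'a::real_normed_field poly"
  assumes "0 \<le> \<sigma>"
  shows "root 3 (poly_norm (smult (of_real (\<sigma> ^ 3)) P)) + sqrt (poly_norm (smult (of_real (\<sigma> ^ 2)) Q))
    = \<sigma> * (root 3 (poly_norm P) + sqrt (poly_norm Q))"
proof -
  have "root 3 (poly_norm (smult (of_real (\<sigma> ^ 3)) P)) = \<sigma> * root 3 (poly_norm P)"
    using assms by (simp add: poly_norm_smult real_root_mult norm_power real_root_power_cancel)
  moreover have "sqrt (poly_norm (smult (of_real (\<sigma> ^ 2)) Q)) = \<sigma> * sqrt (poly_norm Q)"
    using assms by (simp add: poly_norm_smult real_sqrt_mult norm_power)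
  ultimately show ?thesis
    by (simp add: algebra_simps)
qed

lemma weighted_rescaling_subseq:
  fixes P Q :: "nat \<Rightarrow> 'a::{real_normed_field,heine_borel} poly"
  assumes deg: "\<And>n. degree (P n) \<le> k" "\<And>n. degree (Q n) \<le> k"
    and large: "\<And>n. real (Suc n) \<le> root 3 (poly_norm (P n)) + sqrt (poly_norm (Q n))"
  obtains \<sigma> r Pc Qc where "\<And>n. \<sigma> n > 0" "\<sigma> \<longlonglongrightarrow> 0" "strict_mono r"
    "coeffs_tendsto (\<lambda>n. smult (of_real (\<sigma> (r n) ^ 3)) (P (r n))) Pc"
    "coeffs_tendsto (\<lambda>n. smult (of_real (\<sigma> (r n) ^ 2)) (Q (r n))) Qc"
    "Pc \<noteq> 0 \<or> Qc \<noteq> 0"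
proof -
  define \<sigma> where "\<sigma> n = 1 / (root 3 (poly_norm (P n)) + sqrt (poly_norm (Q n)))" for n
  have \<sigma>_pos: "\<sigma> n > 0" and \<sigma>_le: "\<sigma> n \<le> inverse (real (Suc n))" for n
    using large[of n] by (auto simp: \<sigma>_def divide_simps)
  have \<sigma>: "\<sigma> \<longlonglongrightarrow> 0"
  proof (rule tendsto_sandwich[OF _ _ tendsto_const LIMSEQ_inverse_real_of_nat])
    show "\<forall>\<^sub>F n in sequentially. 0 \<le> \<sigma> n"
      using \<sigma>_pos by (simp add: less_imp_le always_eventually)
    show "\<forall>\<^sub>F n in sequentially. \<sigma> n \<le> inverse (real (Suc n))"
      using \<sigma>_le by (simp add: always_eventually)
  qed
  define Ps where "Ps n = smult (of_real (\<sigma> n ^ 3)) (P n)" for n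
  define Qs where "Qs n = smult (of_real (\<sigma> n ^ 2)) (Q n)" for n
  have weighted: "root 3 (poly_norm (Ps n)) + sqrt (poly_norm (Qs n)) = 1" for n
    using weighted_size_smult[of "\<sigma> n" "P n" "Q n"] \<sigma>_pos[of n] large[of n]
    by (simp add: Ps_def Qs_def \<sigma>_def)
  have deg_Ps: "degree (Ps n) \<le> k" and deg_Qs: "degree (Qs n) \<le> k" for n
    using deg[of n] order.trans[OF degree_smult_le] by (simp_all only: Ps_def Qs_def)
  have "root 3 (poly_norm (Ps n)) \<le> 1" "sqrt (poly_norm (Qs n)) \<le> 1" for n
    using weighted[of n] real_root_ge_zero[OF poly_norm_nonneg, of 3 "Ps n"]
      real_sqrt_ge_zero[OF poly_norm_nonneg, of "Qs n"] by linarith+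
  then have "poly_norm (Ps n) \<le> 1" "poly_norm (Qs n) \<le> 1" for n
    by simp_all
  then obtain r Pc Qc where r: "strict_mono r"
    and Pc: "coeffs_tendsto (\<lambda>n. Ps (r n)) Pc" and Qc: "coeffs_tendsto (\<lambda>n. Qs (r n)) Qc"
    using bounded_coeffs_tendsto_subseq_pair[of Ps k 1 Qs] deg_Ps deg_Qs by blast
  have "(\<lambda>n. root 3 (poly_norm (Ps (r n))) + sqrt (poly_norm (Qs (r n))))
      \<longlonglongrightarrow> root 3 (poly_norm Pc) + sqrt (poly_norm Qc)"
    using deg_Ps deg_Qs
    by (intro tendsto_add tendsto_real_root tendsto_real_sqrt coeffs_tendsto_poly_norm Pc Qc)
  then have "root 3 (poly_norm Pc) + sqrt (poly_norm Qc) = 1"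
    using weighted by (simp add: LIMSEQ_const_iff)
  then have "Pc \<noteq> 0 \<or> Qc \<noteq> 0"
    by auto
  moreover have "coeffs_tendsto (\<lambda>n. smult (of_real (\<sigma> (r n) ^ 3)) (P (r n))) Pc"
    "coeffs_tendsto (\<lambda>n. smult (of_real (\<sigma> (r n) ^ 2)) (Q (r n))) Qc"
    using Pc Qc by (simp_all only: Ps_def Qs_def)
  ultimately show ?thesis
    using that[OF \<sigma>_pos \<sigma> r] by blast
qed

lemma finite_if_bounded_closed_isolated:
  fixes S :: "('a::{real_normed_vector,heine_borel} poly \<times> 'a poly) set"
  assumes bounded: "\<And>p q. (p, q) \<in> S \<Longrightarrow>
      degree p \<le> k \<and> degree q \<le> k \<and> poly_norm p \<le> M \<and> poly_norm q \<le> M"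
    and closed: "\<And>X Y p q. (\<And>n. (X n, Y n) \<in> S) \<Longrightarrow>
      coeffs_tendsto X p \<Longrightarrow> coeffs_tendsto Y q \<Longrightarrow> (p, q) \<in> S"
    and isolated: "\<And>X Y p q. (p, q) \<in> S \<Longrightarrow> (\<And>n. (X n, Y n) \<in> S - {(p, q)}) \<Longrightarrow>
      coeffs_tendsto X p \<Longrightarrow> coeffs_tendsto Y q \<Longrightarrow> False"
  shows "finite S"
proof (rule ccontr)
  assume "infinite S"
  then obtain f :: "nat \<Rightarrow> _" where f: "inj f" "range f \<subseteq> S"
    using infinite_countable_subset by blast
  define X where "X n = fst (f n)" for n
  define Y where "Y n = snd (f n)" for n
  have f_eq: "f n = (X n, Y n)" for n
    by (simp add: X_def Y_def)
  have S: "(X n, Y n) \<in> S" for n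
    using f(2) f_eq by (metis range_subsetD)
  obtain r p q where r: "strict_mono r"
    and X: "coeffs_tendsto (\<lambda>n. X (r n)) p" and Y: "coeffs_tendsto (\<lambda>n. Y (r n)) q"
    using bounded_coeffs_tendsto_subseq_pair[of X k M Y] bounded S by metis
  have pq: "(p, q) \<in> S"
    using closed[OF S X Y] .
  have "inj (f \<circ> r)"
    using f(1) strict_mono_imp_inj_on[OF r] by (simp add: inj_compose)
  then have "finite ((f \<circ> r) -` {(p, q)})"
    by (intro finite_vimageI) auto
  then obtain N where N: "\<And>n. f (r n) = (p, q) \<Longrightarrow> n < N"
    unfolding finite_nat_set_iff_bounded by (auto simp: vimage_def)
  have shift: "strict_mono (\<lambda>n. n + N)"
    by (simp add: strict_mono_def)
  show False
  proof (rule isolated[OF pq])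
    show "(X (r (n + N)), Y (r (n + N))) \<in> S - {(p, q)}" for n
      using S N[of "n + N"] f_eq by fastforce
    show "coeffs_tendsto (\<lambda>n. X (r (n + N))) p" "coeffs_tendsto (\<lambda>n. Y (r (n + N))) q"
      using coeffs_tendsto_subseq[OF X shift] coeffs_tendsto_subseq[OF Y shift] by simp_all
  qed
qed


section \<open>The algebra of \<open>P\<^sup>2 - Q\<^sup>3\<close>\<close>

lemma rsquarefree_square_minus_cube_no_common_root:
  fixes P Q :: "'a::field_char_0 poly"
  assumes "rsquarefree (P^2 - Q^3)" "poly P a = 0"
  shows "poly Q a \<noteq> 0"
proof
  assume "poly Q a = 0"
  then have "poly (P^2 - Q^3) a = 0 \<and> poly (pderiv (P^2 - Q^3)) a = 0"
    using assms(2) by (simp add: pderiv_diff pderiv_mult power2_eq_square power3_eq_cube)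
  then show False
    using assms(1) unfolding rsquarefree_roots by blast
qed

lemma rsquarefree_square_minus_cube_coprime:
  fixes P Q :: "'a::{alg_closed_field,field_char_0} poly"
  assumes "rsquarefree (P^2 - Q^3)"
  shows "coprime P Q"
proof (rule coprimeI)
  fix c assume c: "c dvd P" "c dvd Q"
  show "is_unit c"
  proof (rule ccontr)
    assume "\<not> is_unit c"
    have "c \<noteq> 0"
      using c assms by (auto simp: rsquarefree_def)
    then have "degree c > 0"
      using \<open>\<not> is_unit c\<close> is_unit_iff_degree by auto
    then obtain a where "poly c a = 0"
      using alg_closed_imp_poly_has_root by blast
    then have "poly P a = 0" "poly Q a = 0"
      using c by (auto simp: poly_eq_0_iff_dvd intro: dvd_trans)
    then show False
      using rsquarefree_square_minus_cube_no_common_root[OF assms] by blast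
  qed
qed

lemma square_minus_cube_degree_6_imp_cubic:
  fixes P Q :: "'a::idom poly"
  assumes "degree (P^2 - Q^3) = 6" "degree P \<le> 3" "degree Q \<le> 1"
  shows "degree P = 3"
proof (rule ccontr)
  assume "degree P \<noteq> 3"
  then have "degree (P^2) \<le> 4" "degree (Q^3) \<le> 3"
    using assms(2,3) order.trans[OF degree_power_le] by (fastforce intro: le_trans)+
  then have "degree (P^2 - Q^3) \<le> 4"
    using degree_diff_le by fastforce
  then show False
    using assms(1) by simp
qed

lemma square_minus_cube_tangent_trivial:
  fixes P Q U V :: "complex poly"
  assumes F: "degree (P^2 - Q^3) = 6" "rsquarefree (P^2 - Q^3)"
    and deg: "degree P \<le> 3" "degree Q \<le> 2" "degree U \<le> 3" "degree V \<le> 2"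
    and eq: "2 * P * U = 3 * Q^2 * V"
  shows "U = 0 \<and> V = 0"
proof -
  have cop: "coprime P Q"
    using F(2) by (rule rsquarefree_square_minus_cube_coprime)
  have "Q \<noteq> 0"
  proof
    assume "Q = 0"
    then have "is_unit P"
      using cop by simp
    then have "degree P = 0"
      by (auto simp: is_unit_poly_iff)
    then show False
      using F(1) \<open>Q = 0\<close> degree_power_le[of P 2] by simp
  qed
  have "Q^2 dvd 2 * P * U"
    unfolding eq by simp
  then have "Q^2 dvd smult 2 (P * U)"
    by (simp add: numeral_mult_conv_smult)
  then have "Q^2 dvd P * U"
    by (rule dvd_smult_cancel) simp
  then have Q_dvd_U: "Q^2 dvd U"
    using cop coprime_dvd_mult_right_iff[of "Q^2" P U] by (simp add: coprime_commute)
  show ?thesis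
  proof (cases "U = 0")
    case True
    then show ?thesis
      using eq \<open>Q \<noteq> 0\<close> by simp
  next
    case False
    then have "2 * degree Q \<le> degree U"
      using dvd_imp_degree_le[OF Q_dvd_U] \<open>Q \<noteq> 0\<close> by (simp add: degree_power_eq)
    then have "degree P = 3"
      using square_minus_cube_degree_6_imp_cubic[OF F(1) deg(1)] deg(3) by simp
    then have "P \<noteq> 0"
      by auto
    then have "V \<noteq> 0"
      using eq False by (auto simp: numeral_mult_conv_smult)
    have "degree (2 * P * U) = degree (3 * Q^2 * V)"
      using eq by simp
    then have "3 + degree U = 2 * degree Q + degree V"
      using False \<open>Q \<noteq> 0\<close> \<open>P \<noteq> 0\<close> \<open>V \<noteq> 0\<close> \<open>degree P = 3\<close>
      by (simp add: numeral_mult_conv_smult degree_mult_eq degree_power_eq del: mult_smult_left)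
    then show ?thesis
      using \<open>2 * degree Q \<le> degree U\<close> deg(4) by linarith
  qed
qed

lemma square_minus_cube_expansion:
  fixes P Q U V E :: "'a::idom"
  assumes "(P + E * U)^2 - (Q + E * V)^3 = P^2 - Q^3" "E \<noteq> 0"
  shows "2 * P * U - 3 * Q^2 * V + E * (U^2 - 3 * Q * V^2) - E * (E * V^3) = 0"
proof -
  have "E * (2 * P * U - 3 * Q^2 * V + E * (U^2 - 3 * Q * V^2) - E * (E * V^3))
      = (P + E * U)^2 - (Q + E * V)^3 - (P^2 - Q^3)"
    by (simp add: power2_eq_square power3_eq_cube algebra_simps)
  then show ?thesis
    using assms by simp
qed

lemma square_minus_cube_wronskian:
  fixes P Q :: "'a::idom poly"
  shows "P * (2 * pderiv P * Q - 3 * P * pderiv Q)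
    = pderiv (P^2 - Q^3) * Q - 3 * (P^2 - Q^3) * pderiv Q"
  by (simp add: pderiv_diff pderiv_mult power2_eq_square power3_eq_cube algebra_simps)

lemma scaled_square_minus_cube_cofactor:
  fixes P Q F :: "'a::field_char_0 poly"
  assumes "P^2 - Q^3 = smult c F" "c \<noteq> 0" "degree P \<le> 3" "degree Q \<le> 2"
  obtains B where "degree B \<le> 4" "P * B = pderiv F * Q - 3 * F * pderiv Q"
proof
  define W where "W = 2 * pderiv P * Q - 3 * P * pderiv Q"
  show "P * smult (inverse c) W = pderiv F * Q - 3 * F * pderiv Q"
    using square_minus_cube_wronskian[of P Q] assms(1,2)
    by (simp add: W_def pderiv_smult mult_smult_right flip: smult_diff_right)
  have "degree (pderiv P * Q) \<le> 4" "degree (P * pderiv Q) \<le> 4"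
    using degree_mult_le[of "pderiv P" Q] degree_mult_le[of P "pderiv Q"] assms(3,4)
    by (simp_all add: degree_pderiv)
  then have "degree (2 * pderiv P * Q) \<le> 4" "degree (3 * P * pderiv Q) \<le> 4"
    by (simp_all add: numeral_mult_conv_smult mult.assoc)
  then show "degree (smult (inverse c) W) \<le> 4"
    unfolding W_def using degree_diff_le by (metis degree_smult_le order.trans)
qed

lemma square_eq_cube_quadratic:
  fixes P Q :: "complex poly"
  assumes "P^2 = Q^3" "degree Q = 2"
  obtains a c where "c \<noteq> 0" "Q = smult c ([:-a, 1:]^2)" "[:-a, 1:]^3 dvd P"
proof -
  have "Q \<noteq> 0" "P \<noteq> 0"
    using assms by auto
  obtain a where "poly Q a = 0"
    using alg_closed_imp_poly_has_root assms(2) by (metis zero_less_numeral)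
  have "order a (P * P) = order a (Q * Q * Q)"
    using assms(1) by (simp add: power2_eq_square power3_eq_cube)
  then have orders: "2 * order a P = 3 * order a Q"
    using \<open>P \<noteq> 0\<close> \<open>Q \<noteq> 0\<close> by (simp add: order_mult)
  moreover have "0 < order a Q" "order a Q \<le> 2"
    using \<open>poly Q a = 0\<close> \<open>Q \<noteq> 0\<close> order_root order_degree[of Q a] assms(2) by auto
  ultimately have "order a Q = 2" "order a P = 3"
    by presburger+
  then have "[:-a, 1:]^2 dvd Q" "[:-a, 1:]^3 dvd P"
    by (simp_all add: order_divides)
  then obtain K where K: "Q = [:-a, 1:]^2 * K"
    by (elim dvdE)
  with \<open>Q \<noteq> 0\<close> assms(2) have "degree K = 0"
    by (simp add: degree_mult_eq degree_power_eq)
  then obtain c where "K = [:c:]"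
    by (elim degree_eq_zeroE)
  then show ?thesis
    using that[of c a] K \<open>Q \<noteq> 0\<close> \<open>[:-a, 1:]^3 dvd P\<close> by (simp add: mult.commute)
qed

lemma square_dvd_imp_double_root:
  fixes H :: "'a::idom poly"
  assumes "[:-a, 1:]^2 dvd H"
  shows "poly H a = 0 \<and> poly (pderiv H) a = 0"
proof -
  obtain K where "H = [:-a, 1:]^2 * K"
    using assms by (rule dvdE)
  then have "H = [:-a, 1:] * ([:-a, 1:] * K)"
    by (simp only: power2_eq_square mult.assoc)
  then show ?thesis
    by (simp add: pderiv_mult del: mult_pCons_left)
qed

lemma cube_dvd_wronskian_imp_double_root:
  fixes F :: "'a::field_char_0 poly"
  assumes c: "c \<noteq> 0"
    and dvd: "[:-a, 1:]^3 dvd pderiv F * smult c ([:-a, 1:]^2) - 3 * F * pderiv (smult c ([:-a, 1:]^2))"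
  shows "poly F a = 0 \<and> poly (pderiv F) a = 0"
proof -
  define L where "L = [:-a, 1:]"
  define H where "H = L * pderiv F - 6 * F"
  have "pderiv L = 1"
    by (simp add: L_def pderiv_pCons)
  then have "pderiv (smult c (L^2)) = [:c:] * (L + L)"
    by (simp add: pderiv_mult power2_eq_square pderiv_smult)
  then have "pderiv F * smult c (L^2) - 3 * F * pderiv (smult c (L^2)) = [:c:] * (L * H)"
    unfolding H_def by (simp add: power2_eq_square algebra_simps flip: smult_diff_right)
  then have "L * L^2 dvd L * H"
    using dvd c by (simp add: L_def[symmetric] power3_eq_cube power2_eq_square dvd_smult_iff mult.assoc)
  moreover have "L \<noteq> 0"
    by (simp add: L_def)
  ultimately have "L^2 dvd H"
    by simp
  then have "poly H a = 0 \<and> poly (pderiv H) a = 0"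
    unfolding L_def by (rule square_dvd_imp_double_root)
  moreover have "poly L a = 0"
    by (simp add: L_def)
  ultimately show ?thesis
    using \<open>pderiv L = 1\<close> by (simp add: H_def pderiv_mult pderiv_diff)
qed

lemma cusp_not_dvd_wronskian:
  fixes P Q B F :: "complex poly"
  assumes F: "degree F = 6" "rsquarefree F"
    and cusp: "P^2 = Q^3" "P \<noteq> 0"
    and deg: "degree P \<le> 3" "degree Q \<le> 2" "degree B \<le> 4"
    and eq: "P * B = pderiv F * Q - 3 * F * pderiv Q"
  shows False
proof -
  have "Q \<noteq> 0"
    using cusp by auto
  have deg_PQ: "2 * degree P = 3 * degree Q"
    using cusp \<open>Q \<noteq> 0\<close> by (metis degree_power_eq)
  show False
  proof (cases "degree Q = 0")
    case True
    then obtain c where "Q = [:c:]"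
      by (elim degree_eq_zeroE)
    with \<open>Q \<noteq> 0\<close> have "degree (pderiv F * Q - 3 * F * pderiv Q) = 5"
      using F(1) by (simp add: degree_pderiv)
    moreover have "degree (P * B) \<le> 4"
      using degree_mult_le[of P B] True deg_PQ deg(3) by simp
    ultimately show False
      using eq by simp
  next
    case False
    then have "degree Q = 2"
      using deg_PQ deg(2) by presburger
    then obtain a c where c: "c \<noteq> 0" and Q: "Q = smult c ([:-a, 1:]^2)"
      and P: "[:-a, 1:]^3 dvd P"
      using square_eq_cube_quadratic cusp(1) \<open>degree Q = 2\<close> by metis
    have "[:-a, 1:]^3 dvd pderiv F * Q - 3 * F * pderiv Q"
      using P eq by (metis dvd_mult2)
    then have "poly F a = 0 \<and> poly (pderiv F) a = 0"
      unfolding Q by (rule cube_dvd_wronskian_imp_double_root[OF c])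
    then show False
      using F(2) unfolding rsquarefree_roots by blast
  qed
qed


section \<open>Finiteness of the representations\<close>

(* Non-strict degree bounds, so that the set is closed under coefficientwise limits. *)
definition square_minus_cube_reps :: "complex poly \<Rightarrow> (complex poly \<times> complex poly) set" where
  "square_minus_cube_reps F = {(P, Q). degree P \<le> 3 \<and> degree Q \<le> 2 \<and> P^2 - Q^3 = F}"

lemma square_minus_cube_reps_closed:
  assumes "\<And>n. (X n, Y n) \<in> square_minus_cube_reps F"
    and "coeffs_tendsto X P" "coeffs_tendsto Y Q"
  shows "(P, Q) \<in> square_minus_cube_reps F"
proof -
  have "coeffs_tendsto (\<lambda>n. X n ^ 2 - Y n ^ 3) (P^2 - Q^3)"
    using assms(2,3) by (intro coeffs_tendsto_diff coeffs_tendsto_power)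
  moreover have "coeffs_tendsto (\<lambda>n. X n ^ 2 - Y n ^ 3) F"
    using assms(1) coeffs_tendsto_const by (simp add: square_minus_cube_reps_def)
  moreover have "degree P \<le> 3" "degree Q \<le> 2"
    using assms(1) by (auto simp: square_minus_cube_reps_def
        intro: coeffs_tendsto_degree_le[OF assms(2)] coeffs_tendsto_degree_le[OF assms(3)])
  ultimately show ?thesis
    using coeffs_tendsto_unique by (auto simp: square_minus_cube_reps_def)
qed

lemma square_minus_cube_secant_limit:
  fixes U V :: "nat \<Rightarrow> 'a::real_normed_field poly"
  assumes on_curve: "\<And>n. (P + smult (a n) (U n))^2 - (Q + smult (a n) (V n))^3 = P^2 - Q^3"
    and a: "\<And>n. a n \<noteq> 0" "a \<longlonglongrightarrow> 0"
    and U: "coeffs_tendsto U U0" and V: "coeffs_tendsto V V0"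
  shows "2 * P * U0 = 3 * Q^2 * V0"
proof -
  define R where "R n = 2 * P * U n - 3 * Q^2 * V n + smult (a n) (U n ^ 2 - 3 * Q * V n ^ 2)
      - smult (a n) (smult (a n) (V n ^ 3))" for n
  have "R = (\<lambda>n. 0)"
    using square_minus_cube_expansion[of P "[:a n:]" "U n" Q "V n" for n] on_curve a(1)
    by (simp add: R_def fun_eq_iff)
  then have "coeffs_tendsto R 0"
    using coeffs_tendsto_const by simp
  moreover have "coeffs_tendsto R (2 * P * U0 - 3 * Q^2 * V0
      + smult 0 (U0 ^ 2 - 3 * Q * V0 ^ 2) - smult 0 (smult 0 (V0 ^ 3)))"
    unfolding R_def by (intro coeffs_tendsto_add coeffs_tendsto_diff coeffs_tendsto_mult
        coeffs_tendsto_smult coeffs_tendsto_power coeffs_tendsto_const a U V)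
  ultimately show ?thesis
    using coeffs_tendsto_unique by fastforce
qed

lemma square_minus_cube_reps_isolated:
  fixes P Q :: "nat \<Rightarrow> complex poly"
  assumes F: "degree F = 6" "rsquarefree F"
    and PQ0: "(P0, Q0) \<in> square_minus_cube_reps F"
    and PQ: "\<And>n. (P n, Q n) \<in> square_minus_cube_reps F - {(P0, Q0)}"
    and P: "coeffs_tendsto P P0" and Q: "coeffs_tendsto Q Q0"
  shows False
proof -
  have deg_P: "degree (P n - P0) \<le> 3" and deg_Q: "degree (Q n - Q0) \<le> 2" for n
    using PQ[of n] PQ0 by (auto simp: square_minus_cube_reps_def intro: degree_diff_le)
  have deg_Q3: "degree (Q n - Q0) \<le> 3" for n
    using deg_Q[of n] by simp
  have ne: "(P n, Q n) \<noteq> (P0, Q0)" for n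
    using PQ[of n] by blast
  obtain e r U V where e_pos: "\<And>n. e n > 0" and e: "e \<longlonglongrightarrow> 0" and r: "strict_mono r"
    and U: "coeffs_tendsto (\<lambda>n. smult (of_real (1 / e (r n))) (P (r n) - P0)) U"
    and V: "coeffs_tendsto (\<lambda>n. smult (of_real (1 / e (r n))) (Q (r n) - Q0)) V"
    and nonzero: "U \<noteq> 0 \<or> V \<noteq> 0"
    using secant_rescaling_subseq[OF deg_P deg_Q3 ne P Q] by blast
  have "2 * P0 * U = 3 * Q0^2 * V"
  proof (rule square_minus_cube_secant_limit[OF _ _ _ U V])
    show "(\<lambda>n. of_real (e (r n))) \<longlonglongrightarrow> (0 :: complex)"
      using LIMSEQ_subseq_LIMSEQ[OF e r] tendsto_of_real by (fastforce simp: o_def)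
    show "of_real (e (r n)) \<noteq> (0 :: complex)" for n
      using e_pos[of "r n"] by simp
    show "(P0 + smult (of_real (e (r n))) (smult (of_real (1 / e (r n))) (P (r n) - P0)))^2
        - (Q0 + smult (of_real (e (r n))) (smult (of_real (1 / e (r n))) (Q (r n) - Q0)))^3
        = P0^2 - Q0^3" for n
      using PQ[of "r n"] PQ0 e_pos[of "r n"] by (simp add: square_minus_cube_reps_def)
  qed
  moreover have "degree U \<le> 3" "degree V \<le> 2"
    using coeffs_tendsto_degree_le[OF U] coeffs_tendsto_degree_le[OF V]
      order.trans[OF degree_smult_le deg_P] order.trans[OF degree_smult_le deg_Q]
    by blast+
  ultimately have "U = 0 \<and> V = 0"
    using square_minus_cube_tangent_trivial[of P0 Q0 U V] PQ0 F
    by (simp add: square_minus_cube_reps_def)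
  with nonzero show False
    by simp
qed

lemma scaled_square_minus_cube_cofactor_limit:
  fixes Ps Qs :: "nat \<Rightarrow> 'a::{real_normed_field,heine_borel} poly"
  assumes eq: "\<And>n. Ps n ^ 2 - Qs n ^ 3 = smult (c n) F" and c: "\<And>n. c n \<noteq> 0"
    and deg: "\<And>n. degree (Ps n) \<le> 3" "\<And>n. degree (Qs n) \<le> 2"
    and Pc: "coeffs_tendsto Ps Pc" "Pc \<noteq> 0" and Qc: "coeffs_tendsto Qs Qc"
  obtains B where "degree B \<le> 4" "Pc * B = pderiv F * Qc - 3 * F * pderiv Qc"
proof -
  have "\<forall>n. \<exists>b. degree b \<le> 4 \<and> Ps n * b = pderiv F * Qs n - 3 * F * pderiv (Qs n)"
  proof
    fix n
    obtain b where "degree b \<le> 4" "Ps n * b = pderiv F * Qs n - 3 * F * pderiv (Qs n)"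
      using scaled_square_minus_cube_cofactor[OF eq c deg] .
    then show "\<exists>b. degree b \<le> 4 \<and> Ps n * b = pderiv F * Qs n - 3 * F * pderiv (Qs n)"
      by blast
  qed
  then obtain B where deg_B: "\<And>n. degree (B n) \<le> 4"
    and B: "\<And>n. Ps n * B n = pderiv F * Qs n - 3 * F * pderiv (Qs n)"
    unfolding choice_iff by blast
  have "coeffs_tendsto (\<lambda>n. Ps n * B n) (pderiv F * Qc - 3 * F * pderiv Qc)"
    unfolding B by (intro coeffs_tendsto_diff coeffs_tendsto_mult coeffs_tendsto_pderiv
        coeffs_tendsto_const Qc)
  then show ?thesis
    using coeffs_tendsto_factor[where B = B, OF Pc deg_B] that by metis
qed

lemma square_minus_cube_reps_no_escape:
  fixes P Q :: "nat \<Rightarrow> complex poly"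
  assumes F: "degree F = 6" "rsquarefree F"
    and PQ: "\<And>n. (P n, Q n) \<in> square_minus_cube_reps F"
    and large: "\<And>n. real (Suc n) \<le> root 3 (poly_norm (P n)) + sqrt (poly_norm (Q n))"
  shows False
proof -
  have deg_P: "degree (P n) \<le> 3" and deg_Q: "degree (Q n) \<le> 3" for n
    using PQ[of n] by (auto simp: square_minus_cube_reps_def)
  obtain \<sigma> r Pc Qc where \<sigma>_pos: "\<And>n. \<sigma> n > 0" and \<sigma>: "\<sigma> \<longlonglongrightarrow> 0" and r: "strict_mono r"
    and lim_P: "coeffs_tendsto (\<lambda>n. smult (of_real (\<sigma> (r n) ^ 3)) (P (r n))) Pc"
    and lim_Q: "coeffs_tendsto (\<lambda>n. smult (of_real (\<sigma> (r n) ^ 2)) (Q (r n))) Qc"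
    and nonzero: "Pc \<noteq> 0 \<or> Qc \<noteq> 0"
    using weighted_rescaling_subseq[OF deg_P deg_Q large] by blast
  define Ps where "Ps n = smult (of_real (\<sigma> (r n) ^ 3)) (P (r n))" for n
  define Qs where "Qs n = smult (of_real (\<sigma> (r n) ^ 2)) (Q (r n))" for n
  have Pc: "coeffs_tendsto Ps Pc" and Qc: "coeffs_tendsto Qs Qc"
    using lim_P lim_Q by (simp_all add: Ps_def[abs_def] Qs_def[abs_def])
  have deg_Ps: "degree (Ps n) \<le> 3" and deg_Qs: "degree (Qs n) \<le> 2" for n
    using PQ[of "r n"] by (auto simp: Ps_def Qs_def square_minus_cube_reps_def)
  have eq: "Ps n ^ 2 - Qs n ^ 3 = smult (of_real (\<sigma> (r n) ^ 6)) F" for n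
  proof -
    have "Ps n ^ 2 - Qs n ^ 3 = smult (of_real (\<sigma> (r n) ^ 6)) (P (r n) ^ 2 - Q (r n) ^ 3)"
      by (simp add: Ps_def Qs_def smult_power smult_diff_right flip: power_mult)
    then show ?thesis
      using PQ[of "r n"] by (simp add: square_minus_cube_reps_def)
  qed
  have "coeffs_tendsto (\<lambda>n. Ps n ^ 2 - Qs n ^ 3) (Pc^2 - Qc^3)"
    by (intro coeffs_tendsto_diff coeffs_tendsto_power Pc Qc)
  moreover have "coeffs_tendsto (\<lambda>n. Ps n ^ 2 - Qs n ^ 3) (smult (of_real (0 ^ 6)) F)"
    unfolding eq using LIMSEQ_subseq_LIMSEQ[OF \<sigma> r]
    by (intro coeffs_tendsto_smult tendsto_of_real tendsto_power coeffs_tendsto_const)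
      (simp add: o_def)
  ultimately have "Pc^2 - Qc^3 = smult (of_real (0 ^ 6)) F"
    by (rule coeffs_tendsto_unique)
  then have cusp: "Pc^2 = Qc^3"
    by simp
  with nonzero have "Pc \<noteq> 0"
    by auto
  have "of_real (\<sigma> (r n) ^ 6) \<noteq> (0 :: complex)" for n
    using \<sigma>_pos[of "r n"] by simp
  then obtain B where "degree B \<le> 4" "Pc * B = pderiv F * Qc - 3 * F * pderiv Qc"
    using scaled_square_minus_cube_cofactor_limit[OF eq _ deg_Ps deg_Qs Pc \<open>Pc \<noteq> 0\<close> Qc] by blast
  then show False
    using cusp_not_dvd_wronskian[OF F cusp \<open>Pc \<noteq> 0\<close>
        coeffs_tendsto_degree_le[OF Pc deg_Ps] coeffs_tendsto_degree_le[OF Qc deg_Qs]]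
    by metis
qed

lemma square_minus_cube_reps_weighted_bounded:
  assumes F: "degree F = 6" "rsquarefree F"
  shows "\<exists>M. \<forall>(P, Q) \<in> square_minus_cube_reps F. root 3 (poly_norm P) + sqrt (poly_norm Q) \<le> M"
proof (rule ccontr)
  assume unbounded: "\<not> ?thesis"
  have "\<forall>n. \<exists>PQ. PQ \<in> square_minus_cube_reps F \<and>
      real (Suc n) \<le> root 3 (poly_norm (fst PQ)) + sqrt (poly_norm (snd PQ))"
  proof
    fix n
    have "\<not> (\<forall>(P, Q) \<in> square_minus_cube_reps F.
        root 3 (poly_norm P) + sqrt (poly_norm Q) \<le> real (Suc n))"
      using unbounded by blast
    then obtain P Q where "(P, Q) \<in> square_minus_cube_reps F"
      and "real (Suc n) < root 3 (poly_norm P) + sqrt (poly_norm Q)"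
      by (auto simp: not_le)
    then show "\<exists>PQ. PQ \<in> square_minus_cube_reps F \<and>
        real (Suc n) \<le> root 3 (poly_norm (fst PQ)) + sqrt (poly_norm (snd PQ))"
      by (intro exI[of _ "(P, Q)"]) simp
  qed
  then obtain f where "\<And>n. f n \<in> square_minus_cube_reps F"
    and "\<And>n. real (Suc n) \<le> root 3 (poly_norm (fst (f n))) + sqrt (poly_norm (snd (f n)))"
    unfolding choice_iff by blast
  then show False
    using square_minus_cube_reps_no_escape[OF F, of "\<lambda>n. fst (f n)" "\<lambda>n. snd (f n)"] by simp
qed

lemma square_minus_cube_reps_bounded:
  assumes F: "degree F = 6" "rsquarefree F"
  obtains M where "\<And>P Q. (P, Q) \<in> square_minus_cube_reps F \<Longrightarrow> poly_norm P \<le> M \<and> poly_norm Q \<le> M"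
proof -
  obtain M where M: "\<And>P Q. (P, Q) \<in> square_minus_cube_reps F \<Longrightarrow>
      root 3 (poly_norm P) + sqrt (poly_norm Q) \<le> M"
    using square_minus_cube_reps_weighted_bounded[OF F] by blast
  show ?thesis
  proof (rule that)
    fix P Q assume "(P, Q) \<in> square_minus_cube_reps F"
    then have "root 3 (poly_norm P) + sqrt (poly_norm Q) \<le> M"
      by (rule M)
    moreover have nonneg: "0 \<le> root 3 (poly_norm P)" "0 \<le> sqrt (poly_norm Q)"
      by (simp_all add: poly_norm_nonneg)
    ultimately have "root 3 (poly_norm P) \<le> M" "sqrt (poly_norm Q) \<le> M"
      by linarith+
    then have "root 3 (poly_norm P) ^ 3 \<le> M ^ 3" "sqrt (poly_norm Q) ^ 2 \<le> M ^ 2"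
      using nonneg by (simp_all only: power_mono)
    moreover have "root 3 (poly_norm P) ^ 3 = poly_norm P" "sqrt (poly_norm Q) ^ 2 = poly_norm Q"
      by (simp_all add: poly_norm_nonneg real_root_pow_pos2)
    ultimately show "poly_norm P \<le> max (M ^ 3) (M ^ 2) \<and> poly_norm Q \<le> max (M ^ 3) (M ^ 2)"
      by (simp add: le_max_iff_disj)
  qed
qed

theorem mainTheorem10:
  fixes F :: "complex poly"
  assumes "degree F = 6" and "rsquarefree F"
  shows "finite {(P :: complex poly, Q :: complex poly).
            degree P = 3 \<and> degree Q = 2 \<and> F = P ^ 2 - Q ^ 3}"
proof -
  obtain M where M: "\<And>P Q. (P, Q) \<in> square_minus_cube_reps F \<Longrightarrow> poly_norm P \<le> M \<and> poly_norm Q \<le> M"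
    using square_minus_cube_reps_bounded[OF assms] by blast
  have "finite (square_minus_cube_reps F)"
  proof (rule finite_if_bounded_closed_isolated)
    show "degree P \<le> 3 \<and> degree Q \<le> 3 \<and> poly_norm P \<le> M \<and> poly_norm Q \<le> M"
      if "(P, Q) \<in> square_minus_cube_reps F" for P Q
      using that M by (auto simp: square_minus_cube_reps_def)
  qed (use square_minus_cube_reps_closed square_minus_cube_reps_isolated[OF assms] in blast)+
  then show ?thesis
    by (rule finite_subset[rotated]) (auto simp: square_minus_cube_reps_def)
qed

end
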